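(* Let $\mathbf{K}$ be an algebraically closed field of arbitrary characteristic, complete with respect to a non-archimedean absolute value. Let $f\colon \mathbf{K}\rightarrow\mathbb{P}^2(\mathbf{K})$ be a nonconstant analytic curve. Let $L$ be a line and $C$ be a nonsingular conic in $\mathbb{P}^2(\mathbf{K})$, and suppose that $L$ and $C$ intersect transversally. If $f$ avoids $L$ and $C$ (i.e. $f(\mathbf{K})\cap(L\cup C)=\varnothing$), then the image of $f$ is contained in the tangent line of $C$ at some intersection point of $L$ and $C$.
   Context: An analytic map $f\colon\mathbf{K}\to\mathbb{P}^2(\mathbf{K})$ is one given by a reduced representation $(f_0,f_1,f_2)$ of entire functions (power series converging on all of $\mathbf{K}$) without common zeros. *)

theory Defs
  imports Complex_Main "HOL-Computational_Algebra.Polynomial"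
begin

definition algebraically_closed :: "'a::field itself \<Rightarrow> bool" where
  "algebraically_closed _ \<longleftrightarrow> (\<forall>p :: 'a poly. degree p > 0 \<longrightarrow> (\<exists>x. poly p x = 0))"

definition nonarch_abs :: "('a::field \<Rightarrow> real) \<Rightarrow> bool" where
  "nonarch_abs av \<longleftrightarrow>
     (\<forall>x. av x \<ge> 0) \<and> (\<forall>x. av x = 0 \<longleftrightarrow> x = 0) \<and>
     (\<forall>x y. av (x * y) = av x * av y) \<and>
     (\<forall>x y. av (x + y) \<le> max (av x) (av y))"

definition av_complete :: "('a::field \<Rightarrow> real) \<Rightarrow> bool" where
  "av_complete av \<longleftrightarrow>
     (\<forall>X :: nat \<Rightarrow> 'a.
        (\<forall>e>0. \<exists>N. \<forall>m\<ge>N. \<forall>n\<ge>N. av (X m - X n) < e) \<longrightarrow>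
        (\<exists>L. (\<lambda>n. av (X n - L)) \<longlonglongrightarrow> 0))"

definition av_entire :: "('a::field \<Rightarrow> real) \<Rightarrow> ('a \<Rightarrow> 'a) \<Rightarrow> bool" where
  "av_entire av g \<longleftrightarrow>
     (\<exists>c :: nat \<Rightarrow> 'a. \<forall>z. (\<lambda>N. av ((\<Sum>n<N. c n * z ^ n) - g z)) \<longlonglongrightarrow> 0)"

section \<open>Projective plane: homogeneous coordinates x 0, x 1, x 2\<close>

definition nonzero3 :: "(nat \<Rightarrow> 'a::field) \<Rightarrow> bool" where
  "nonzero3 x \<longleftrightarrow> (\<exists>i<3. x i \<noteq> 0)"

text \<open>Two coordinate vectors are proportional (same projective point / same line).\<close>
definition proportional3 :: "(nat \<Rightarrow> 'a::field) \<Rightarrow> (nat \<Rightarrow> 'a) \<Rightarrow> bool" where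
  "proportional3 u v \<longleftrightarrow> (\<forall>i<3. \<forall>j<3. u i * v j = u j * v i)"

text \<open>Linear form with coefficients a; the line is {[x]. lform a x = 0}, a nonzero.\<close>
definition lform :: "(nat \<Rightarrow> 'a::field) \<Rightarrow> (nat \<Rightarrow> 'a) \<Rightarrow> 'a" where
  "lform a x = (\<Sum>i<3. a i * x i)"

definition qform :: "(nat \<Rightarrow> nat \<Rightarrow> 'a::field) \<Rightarrow> (nat \<Rightarrow> 'a) \<Rightarrow> 'a" where
  "qform q x = (\<Sum>i<3. \<Sum>j<3. if i \<le> j then q i j * x i * x j else 0)"

text \<open>Formal partial derivative of Q with respect to x k (valid in every characteristic).\<close>
definition qgrad :: "(nat \<Rightarrow> nat \<Rightarrow> 'a::field) \<Rightarrow> (nat \<Rightarrow> 'a) \<Rightarrow> nat \<Rightarrow> 'a" where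
  "qgrad q x k = (\<Sum>i<3. \<Sum>j<3. if i \<le> j then
       q i j * ((if i = k then x j else 0) + (if j = k then x i else 0)) else 0)"

definition is_line :: "(nat \<Rightarrow> 'a::field) \<Rightarrow> bool" where
  "is_line a \<longleftrightarrow> nonzero3 a"

definition nonsingular_conic :: "(nat \<Rightarrow> nat \<Rightarrow> 'a::field) \<Rightarrow> bool" where
  "nonsingular_conic q \<longleftrightarrow>
     (\<exists>i<3. \<exists>j<3. i \<le> j \<and> q i j \<noteq> 0) \<and>
     \<not> (\<exists>x. nonzero3 x \<and> qform q x = 0 \<and> (\<forall>k<3. qgrad q x k = 0))"

text \<open>The tangent line of C at p has coefficients qgrad q p.
  L and C intersect transversally: at every common point, the tangent line of C
  differs from L.\<close>
definition transversal :: "(nat \<Rightarrow> 'a::field) \<Rightarrow> (nat \<Rightarrow> nat \<Rightarrow> 'a) \<Rightarrow> bool" where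
  "transversal a q \<longleftrightarrow>
     (\<forall>p. nonzero3 p \<and> lform a p = 0 \<and> qform q p = 0 \<longrightarrow>
          \<not> proportional3 (qgrad q p) a)"

text \<open>Reduced representation (f 0, f 1, f 2) of entire functions without common zeros.\<close>
definition analytic_curve :: "('a::field \<Rightarrow> real) \<Rightarrow> (nat \<Rightarrow> 'a \<Rightarrow> 'a) \<Rightarrow> bool" where
  "analytic_curve av f \<longleftrightarrow> (\<forall>i<3. av_entire av (f i)) \<and> (\<forall>z. nonzero3 (\<lambda>i. f i z))"

definition nonconstant_curve :: "(nat \<Rightarrow> 'a::field \<Rightarrow> 'a) \<Rightarrow> bool" where
  "nonconstant_curve f \<longleftrightarrow> (\<exists>z w. \<not> proportional3 (\<lambda>i. f i z) (\<lambda>i. f i w))"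

end

theory Submission
  imports Defs
begin

text \<open>Along f, the linear form defining L and the quadratic form defining C are entire
  functions without zeros, hence constant: over a complete algebraically closed
  non-archimedean field, a power series with a nonzero coefficient of positive degree has a
  zero (a Newton polygon argument).  Let p1, p2 be the two points of L \<inter> C and u1, u2 the
  equations of the tangent lines there.  Writing f(z) - f(0) in the basis p1, p2 of the plane
  of L, the two constancies combine to the identity u1(f z) u2(f z) = u1(f 0) u2(f 0).  If this
  constant is nonzero, u1 \<circ> f and u2 \<circ> f are constant too, and since the forms of L, u1
  and u2 are independent, f is constant.  Otherwise, as entire functions form an integral
  domain, u1 \<circ> f or u2 \<circ> f vanishes identically: f lies in a tangent line.\<close>

section \<open>Non-archimedean absolute values\<close>

lemma LIMSEQ_0_sandwich:
  fixes u w :: "nat \<Rightarrow> real"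
  assumes "\<And>n. 0 \<le> u n" "\<And>n. u n \<le> w n" "w \<longlonglongrightarrow> 0"
  shows "u \<longlonglongrightarrow> 0"
  by (rule tendsto_sandwich[of "\<lambda>_. 0" u sequentially w]) (use assms in auto)

locale nonarch_field =
  fixes av :: "'a::field \<Rightarrow> real"
  assumes nonarch: "nonarch_abs av"
begin

lemma av_nonneg [simp]: "0 \<le> av x"
  using nonarch unfolding nonarch_abs_def by blast

lemma av_eq_0_iff [simp]: "av x = 0 \<longleftrightarrow> x = 0"
  using nonarch unfolding nonarch_abs_def by blast

lemma av_0 [simp]: "av 0 = 0"
  by simp

lemma av_mult: "av (x * y) = av x * av y"
  using nonarch unfolding nonarch_abs_def by blast

lemma av_add_le_max: "av (x + y) \<le> max (av x) (av y)"
  using nonarch unfolding nonarch_abs_def by blast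

lemma av_pos: "x \<noteq> 0 \<Longrightarrow> 0 < av x"
  using av_nonneg[of x] av_eq_0_iff[of x] by linarith

lemma av_1 [simp]: "av 1 = 1"
proof -
  have "av 1 = av 1 * av 1"
    using av_mult[of 1 1] by simp
  moreover have "av 1 \<noteq> 0"
    by simp
  ultimately show ?thesis
    by (metis mult_cancel_right1)
qed

lemma av_minus [simp]: "av (- x) = av x"
proof -
  have "av (-1) * av (-1) = 1"
    by (simp flip: av_mult)
  then have "av (-1) ^ 2 = 1"
    by (simp add: power2_eq_square)
  then have "av (-1) = 1"
    using av_nonneg[of "-1"] power2_eq_1_iff[of "av (-1)"] by linarith
  then show ?thesis
    using av_mult[of "-1" x] by simp
qed

lemma av_diff_commute: "av (x - y) = av (y - x)"
  by (metis av_minus minus_diff_eq)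

lemma av_power: "av (x ^ n) = av x ^ n"
  by (induction n) (auto simp: av_mult)

lemma av_inverse: "av (inverse x) = inverse (av x)"
proof (cases "x = 0")
  case False
  then have "av (inverse x) * av x = 1"
    using av_mult[of "inverse x" x] by simp
  then show ?thesis
    by (metis inverse_unique mult.commute)
qed simp

lemma av_triangle: "av (x + y) \<le> av x + av y"
  using av_add_le_max[of x y] av_nonneg[of x] av_nonneg[of y] by linarith

lemma av_add_le: "av x \<le> B \<Longrightarrow> av y \<le> B \<Longrightarrow> av (x + y) \<le> B"
  using av_add_le_max[of x y] by linarith

lemma av_diff_le: "av x \<le> B \<Longrightarrow> av y \<le> B \<Longrightarrow> av (x - y) \<le> B"
  using av_add_le[of x B "- y"] by simp

lemma av_add_less: "av x < B \<Longrightarrow> av y < B \<Longrightarrow> av (x + y) < B"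
  using av_add_le_max[of x y] by linarith

lemma av_sum_le: "(\<And>i. i \<in> A \<Longrightarrow> av (f i) \<le> B) \<Longrightarrow> 0 \<le> B \<Longrightarrow> av (sum f A) \<le> B"
  by (induction A rule: infinite_finite_induct) (simp_all add: av_add_le)

lemma av_sum_less: "(\<And>i. i \<in> A \<Longrightarrow> av (f i) < B) \<Longrightarrow> 0 < B \<Longrightarrow> av (sum f A) < B"
  by (induction A rule: infinite_finite_induct) (simp_all add: av_add_less)

definition av_tendsto :: "(nat \<Rightarrow> 'a) \<Rightarrow> 'a \<Rightarrow> bool" where
  "av_tendsto X L \<longleftrightarrow> (\<lambda>n. av (X n - L)) \<longlonglongrightarrow> 0"

lemma av_tendsto_le:
  assumes X: "av_tendsto X L" and Y: "av_tendsto Y M"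
    and bound: "\<And>n. K \<le> n \<Longrightarrow> av (X n - Y n) \<le> B"
  shows "av (L - M) \<le> B"
proof -
  have lim: "(\<lambda>n. av (X n - L) + B + av (Y n - M)) \<longlonglongrightarrow> 0 + B + 0"
    using X Y unfolding av_tendsto_def by (intro tendsto_intros)
  have "av (L - M) \<le> av (X n - L) + B + av (Y n - M)" if "K \<le> n" for n
  proof -
    have eq: "L - M = - (X n - L) + ((X n - Y n) + (Y n - M))"
      by simp
    have "av (L - M) \<le> av (- (X n - L)) + av ((X n - Y n) + (Y n - M))"
      unfolding eq by (rule av_triangle)
    also have "\<dots> \<le> av (X n - L) + (av (X n - Y n) + av (Y n - M))"
      using av_triangle[of "X n - Y n" "Y n - M"] by (simp add: av_diff_commute[of L])
    finally have "av (L - M) \<le> av (X n - L) + (av (X n - Y n) + av (Y n - M))" .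
    then show ?thesis
      using bound[OF that] by linarith
  qed
  then have "av (L - M) \<le> 0 + B + 0"
    by (intro LIMSEQ_le_const[OF lim]) blast
  then show ?thesis
    by simp
qed

lemma av_tendsto_unique: "av_tendsto X L \<Longrightarrow> av_tendsto X M \<Longrightarrow> L = M"
  using av_tendsto_le[of X L X M 0 0] av_nonneg[of "L - M"] by simp

lemma av_tendsto_eventually_const: "(\<And>n. K \<le> n \<Longrightarrow> X n = L) \<Longrightarrow> av_tendsto X L"
  unfolding av_tendsto_def by (rule tendsto_eventually, rule eventually_sequentiallyI) simp

lemma av_le_if_av_tendsto: "av_tendsto X L \<Longrightarrow> (\<And>n. av (X n) \<le> B) \<Longrightarrow> av L \<le> B"
  using av_tendsto_le[of X L "\<lambda>_. 0" 0 0 B] av_tendsto_eventually_const[of 0 "\<lambda>_. 0" 0] by simp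

lemma av_tendsto_ignore_initial_segment: "av_tendsto X L \<Longrightarrow> av_tendsto (\<lambda>n. X (n + k)) L"
  unfolding av_tendsto_def by (rule LIMSEQ_ignore_initial_segment)

lemma av_tendsto_add:
  assumes "av_tendsto X L" "av_tendsto Y M"
  shows "av_tendsto (\<lambda>n. X n + Y n) (L + M)"
  unfolding av_tendsto_def
proof (rule LIMSEQ_0_sandwich)
  show "av (X n + Y n - (L + M)) \<le> av (X n - L) + av (Y n - M)" for n
    unfolding add_diff_add by (rule av_triangle)
  show "(\<lambda>n. av (X n - L) + av (Y n - M)) \<longlonglongrightarrow> 0"
    using tendsto_add[OF assms[unfolded av_tendsto_def]] by simp
qed simp

lemma av_tendsto_cmult:
  assumes "av_tendsto X L"
  shows "av_tendsto (\<lambda>n. k * X n) (k * L)"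
proof -
  have "(\<lambda>n. av k * av (X n - L)) \<longlonglongrightarrow> 0"
    using assms tendsto_mult_left[of _ 0 sequentially "av k"] unfolding av_tendsto_def by simp
  moreover have "av k * av (X n - L) = av (k * X n - k * L)" for n
    by (simp add: av_mult flip: right_diff_distrib)
  ultimately show ?thesis
    unfolding av_tendsto_def by simp
qed

lemma av_tendsto_mult_bounded:
  assumes X: "av_tendsto X L" and Y: "av_tendsto Y M" and bound: "\<And>n. av (Y n) \<le> B"
  shows "av_tendsto (\<lambda>n. X n * Y n) (L * M)"
  unfolding av_tendsto_def
proof (rule LIMSEQ_0_sandwich)
  fix n
  have "X n * Y n - L * M = (X n - L) * Y n + L * (Y n - M)"
    by (simp add: algebra_simps)
  then have "av (X n * Y n - L * M) \<le> av ((X n - L) * Y n) + av (L * (Y n - M))"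
    by (simp only: av_triangle)
  also have "\<dots> \<le> av (X n - L) * B + av L * av (Y n - M)"
    by (simp add: av_mult bound mult_left_mono)
  finally show "av (X n * Y n - L * M) \<le> av (X n - L) * B + av L * av (Y n - M)" .
next
  show "(\<lambda>n. av (X n - L) * B + av L * av (Y n - M)) \<longlonglongrightarrow> 0"
    using tendsto_add[OF tendsto_mult_right[OF X[unfolded av_tendsto_def], of B]
        tendsto_mult_left[OF Y[unfolded av_tendsto_def], of "av L"]] by simp
qed simp

end

section \<open>Power series and entire functions\<close>

context nonarch_field
begin

lemma av_bounded_if_tendsto_0:
  assumes "(\<lambda>n. av (a n)) \<longlonglongrightarrow> 0"
  shows "\<exists>B>0. \<forall>n. av (a n) \<le> B"
proof -
  obtain B where "0 < B" "\<And>n. norm (av (a n)) \<le> B"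
    using BseqE[OF convergent_imp_Bseq[OF convergentI[OF assms]]] by blast
  then show ?thesis
    by auto
qed

lemma av_sum_square_minus_triangle_tendsto_0:
  assumes a: "(\<lambda>i. av (a i)) \<longlonglongrightarrow> 0" and b: "(\<lambda>j. av (b j)) \<longlonglongrightarrow> 0"
  shows "(\<lambda>N. av (\<Sum>(i, j) \<in> {..<N} \<times> {..<N} - {(i, j). i + j < N}. a i * b j)) \<longlonglongrightarrow> 0"
proof (rule LIMSEQ_I)
  fix r :: real
  assume "0 < r"
  obtain Ba where Ba: "0 < Ba" "\<And>i. av (a i) \<le> Ba"
    using av_bounded_if_tendsto_0[OF a] by blast
  obtain Bb where Bb: "0 < Bb" "\<And>j. av (b j) \<le> Bb"
    using av_bounded_if_tendsto_0[OF b] by blast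
  obtain Ma where Ma: "\<And>i. Ma \<le> i \<Longrightarrow> av (a i) < r / Bb"
    using a[unfolded LIMSEQ_iff, rule_format, of "r / Bb"] \<open>0 < r\<close> Bb(1) by auto
  obtain Mb where Mb: "\<And>j. Mb \<le> j \<Longrightarrow> av (b j) < r / Ba"
    using b[unfolded LIMSEQ_iff, rule_format, of "r / Ba"] \<open>0 < r\<close> Ba(1) by auto
  have "av (\<Sum>(i, j) \<in> {..<N} \<times> {..<N} - {(i, j). i + j < N}. a i * b j) < r" if N: "Ma + Mb \<le> N" for N
  proof (rule av_sum_less)
    fix x
    assume "x \<in> {..<N} \<times> {..<N} - {(i, j). i + j < N}"
    then obtain i j where x: "x = (i, j)" and "N \<le> i + j"
      by auto
    then consider "Ma \<le> i" | "Mb \<le> j"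
      using N by linarith
    then have "av (a i) * av (b j) < r"
    proof cases
      case 1
      then have "av (a i) * av (b j) \<le> av (a i) * Bb"
        using Bb(2) by (simp add: mult_left_mono)
      also have "\<dots> < r"
        using Ma[OF 1] Bb(1) by (simp add: pos_less_divide_eq)
      finally show ?thesis .
    next
      case 2
      then have "av (a i) * av (b j) \<le> Ba * av (b j)"
        using Ba(2) by (simp add: mult_right_mono)
      also have "\<dots> < r"
        using Mb[OF 2] Ba(1) by (simp add: pos_less_divide_eq mult.commute)
      finally show ?thesis .
    qed
    then show "av (case x of (i, j) \<Rightarrow> a i * b j) < r"
      using x by (simp add: av_mult)
  qed (use \<open>0 < r\<close> in simp)
  then show "\<exists>N0. \<forall>N\<ge>N0. norm (av (\<Sum>(i, j) \<in> {..<N} \<times> {..<N} - {(i, j). i + j < N}. a i * b j) - 0) < r"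
    by auto
qed

definition psum :: "(nat \<Rightarrow> 'a) \<Rightarrow> 'a \<Rightarrow> nat \<Rightarrow> 'a" where
  "psum c z N = (\<Sum>n<N. c n * z ^ n)"

definition has_pseries :: "(nat \<Rightarrow> 'a) \<Rightarrow> ('a \<Rightarrow> 'a) \<Rightarrow> bool" where
  "has_pseries c g \<longleftrightarrow> (\<forall>z. av_tendsto (psum c z) (g z))"

lemma av_entire_iff_has_pseries: "av_entire av g \<longleftrightarrow> (\<exists>c. has_pseries c g)"
  unfolding av_entire_def has_pseries_def av_tendsto_def psum_def ..

lemma psum_eq_first_term:
  assumes "\<And>n. 0 < n \<Longrightarrow> c n * z ^ n = 0" "0 < N"
  shows "psum c z N = c 0"
proof -
  have "psum c z N = (\<Sum>n<N. if n = 0 then c 0 else 0)"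
    unfolding psum_def by (rule sum.cong) (use assms(1) in auto)
  also have "\<dots> = c 0"
    using assms(2) by (simp add: sum.delta)
  finally show ?thesis .
qed

lemma has_pseries_eq_first_term:
  assumes "has_pseries c g" "\<And>n. 0 < n \<Longrightarrow> c n * z ^ n = 0"
  shows "g z = c 0"
proof (rule av_tendsto_unique)
  show "av_tendsto (psum c z) (g z)"
    using assms(1) unfolding has_pseries_def by blast
  show "av_tendsto (psum c z) (c 0)"
    by (rule av_tendsto_eventually_const[of 1]) (use psum_eq_first_term[OF assms(2)] in auto)
qed

lemma has_pseries_at_0: "has_pseries c g \<Longrightarrow> g 0 = c 0"
  by (rule has_pseries_eq_first_term) simp_all

lemma has_pseries_const: "has_pseries (\<lambda>n. if n = 0 then k else 0) (\<lambda>_. k)"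
  unfolding has_pseries_def
  by (intro allI av_tendsto_eventually_const[of 1]) (simp add: psum_eq_first_term)

lemma has_pseries_add:
  assumes "has_pseries c g" "has_pseries d h"
  shows "has_pseries (\<lambda>n. c n + d n) (\<lambda>z. g z + h z)"
proof -
  have "psum (\<lambda>n. c n + d n) z = (\<lambda>N. psum c z N + psum d z N)" for z
    by (simp add: fun_eq_iff psum_def sum.distrib distrib_right)
  then show ?thesis
    using assms av_tendsto_add unfolding has_pseries_def by presburger
qed

lemma has_pseries_cmult:
  assumes "has_pseries c g"
  shows "has_pseries (\<lambda>n. k * c n) (\<lambda>z. k * g z)"
proof -
  have "psum (\<lambda>n. k * c n) z = (\<lambda>N. k * psum c z N)" for z
    by (simp add: fun_eq_iff psum_def sum_distrib_left mult.assoc)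
  then show ?thesis
    using assms av_tendsto_cmult unfolding has_pseries_def by presburger
qed

lemma has_pseries_rescale:
  assumes "has_pseries c g"
  shows "has_pseries (\<lambda>n. c n * x ^ n) (\<lambda>z. g (x * z))"
proof -
  have "psum (\<lambda>n. c n * x ^ n) z = psum c (x * z)" for z
    by (simp add: fun_eq_iff psum_def power_mult_distrib mult.assoc)
  then show ?thesis
    using assms unfolding has_pseries_def by presburger
qed

lemma has_pseries_terms_tendsto_0:
  assumes "has_pseries c g"
  shows "(\<lambda>n. av (c n * z ^ n)) \<longlonglongrightarrow> 0"
proof (rule LIMSEQ_0_sandwich)
  have lim: "(\<lambda>n. av (psum c z n - g z)) \<longlonglongrightarrow> 0"
    using assms unfolding has_pseries_def av_tendsto_def by blast
  show "(\<lambda>n. av (psum c z (Suc n) - g z) + av (psum c z n - g z)) \<longlonglongrightarrow> 0"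
    using tendsto_add[OF LIMSEQ_Suc[OF lim] lim] by simp
  fix n
  have "c n * z ^ n = (psum c z (Suc n) - g z) + - (psum c z n - g z)"
    by (simp add: psum_def)
  then show "av (c n * z ^ n) \<le> av (psum c z (Suc n) - g z) + av (psum c z n - g z)"
    by (metis av_minus av_triangle)
qed simp

lemma finite_dominating_terms:
  assumes "has_pseries c g" "c 0 \<noteq> 0"
  shows "finite {n. av (c 0) \<le> av (c n * x ^ n)}"
proof -
  obtain K where "\<And>n. K \<le> n \<Longrightarrow> av (c n * x ^ n) < av (c 0)"
    using has_pseries_terms_tendsto_0[OF assms(1), unfolded LIMSEQ_iff, rule_format, of "av (c 0)"]
      av_pos[OF assms(2)] by force
  then have "{n. av (c 0) \<le> av (c n * x ^ n)} \<subseteq> {..<K}"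
    by (force simp: not_le[symmetric])
  then show ?thesis
    by (rule finite_subset) simp
qed

lemma psum_cauchy_product:
  "psum c z N * psum d z N - psum (\<lambda>n. \<Sum>i\<le>n. c i * d (n - i)) z N =
     (\<Sum>(i, j) \<in> {..<N} \<times> {..<N} - {(i, j). i + j < N}. (c i * z ^ i) * (d j * z ^ j))"
proof -
  let ?t = "\<lambda>(i, j). (c i * z ^ i) * (d j * z ^ j)"
  have "psum (\<lambda>n. \<Sum>i\<le>n. c i * d (n - i)) z N = (\<Sum>n<N. \<Sum>i\<le>n. ?t (i, n - i))"
    unfolding psum_def sum_distrib_right
    by (intro sum.cong refl) (simp add: algebra_simps flip: power_add)
  also have "\<dots> = sum ?t {(i, j). i + j < N}"
    using sum.triangle_reindex[of "\<lambda>i j. ?t (i, j)" N] by simp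
  finally have triangle: "psum (\<lambda>n. \<Sum>i\<le>n. c i * d (n - i)) z N = sum ?t {(i, j). i + j < N}" .
  have square: "psum c z N * psum d z N = sum ?t ({..<N} \<times> {..<N})"
    unfolding psum_def sum_product sum.cartesian_product by simp
  have "{(i, j). i + j < N} \<subseteq> {..<N} \<times> {..<N}"
    by auto
  then show ?thesis
    unfolding triangle square by (simp add: sum.subset_diff[of _ "{..<N} \<times> {..<N}"])
qed

lemma has_pseries_mult:
  assumes c: "has_pseries c g" and d: "has_pseries d h"
  shows "has_pseries (\<lambda>n. \<Sum>i\<le>n. c i * d (n - i)) (\<lambda>z. g z * h z)"
  unfolding has_pseries_def
proof
  fix z
  let ?p = "\<lambda>n. \<Sum>i\<le>n. c i * d (n - i)"
  obtain B where "\<And>j. av (d j * z ^ j) \<le> B"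
    using av_bounded_if_tendsto_0[OF has_pseries_terms_tendsto_0[OF d]] by blast
  then have "av (psum d z N) \<le> B" for N
    unfolding psum_def by (intro av_sum_le) (auto intro: order_trans[OF av_nonneg])
  then have product: "av_tendsto (\<lambda>N. psum c z N * psum d z N) (g z * h z)"
    using av_tendsto_mult_bounded c d unfolding has_pseries_def by blast
  have "av_tendsto (\<lambda>N. psum c z N * psum d z N - psum ?p z N) 0"
    unfolding av_tendsto_def psum_cauchy_product
    using av_sum_square_minus_triangle_tendsto_0[OF has_pseries_terms_tendsto_0[OF c]
        has_pseries_terms_tendsto_0[OF d]] by simp
  from av_tendsto_add[OF product av_tendsto_cmult[OF this, of "-1"]]
  show "av_tendsto (psum ?p z) (g z * h z)"
    by simp
qed

lemma has_pseries_divide_power: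
  assumes c: "has_pseries c g" and vanish: "\<And>n. n < k \<Longrightarrow> c n = 0"
  shows "has_pseries (\<lambda>n. c (n + k)) (\<lambda>z. if z = 0 then c k else g z / z ^ k)"
  unfolding has_pseries_def
proof
  fix z
  show "av_tendsto (psum (\<lambda>n. c (n + k)) z) (if z = 0 then c k else g z / z ^ k)"
  proof (cases "z = 0")
    case True
    then show ?thesis
      by (simp add: av_tendsto_eventually_const[of 1] psum_eq_first_term)
  next
    case False
    have "psum c z (N + k) = z ^ k * psum (\<lambda>n. c (n + k)) z N" for N
      by (induction N) (simp_all add: psum_def vanish algebra_simps power_add)
    then have "psum (\<lambda>n. c (n + k)) z = (\<lambda>N. inverse (z ^ k) * psum c z (N + k))"
      using False by (simp add: fun_eq_iff)
    moreover have "av_tendsto (\<lambda>N. inverse (z ^ k) * psum c z (N + k)) (inverse (z ^ k) * g z)"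
      using c unfolding has_pseries_def by (intro av_tendsto_cmult av_tendsto_ignore_initial_segment) blast
    ultimately show ?thesis
      using False by (simp add: divide_inverse mult.commute)
  qed
qed

lemma av_psum_diff_le:
  assumes "\<And>n. av (d n) \<le> 1" "av x \<le> 1" "av y \<le> 1"
  shows "av (psum d x M - psum d y M) \<le> av (x - y)"
proof -
  have "psum d x M - psum d y M = (\<Sum>n<M. d n * (x ^ n - y ^ n))"
    unfolding psum_def by (simp add: sum_subtractf algebra_simps)
  also have "av \<dots> \<le> av (x - y)"
  proof (rule av_sum_le)
    fix n
    have "av (\<Sum>i<n. y ^ (n - Suc i) * x ^ i) \<le> 1"
      by (rule av_sum_le) (use assms in \<open>auto simp: av_mult av_power intro!: mult_le_one power_le_one\<close>)
    then have "av (x ^ n - y ^ n) \<le> av (x - y)"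
      unfolding power_diff_sumr2[of x n y] av_mult by (simp add: mult_left_le)
    moreover have "av (d n) * av (x ^ n - y ^ n) \<le> av (x ^ n - y ^ n)"
      using assms(1)[of n] by (simp add: mult_left_le_one_le)
    ultimately show "av (d n * (x ^ n - y ^ n)) \<le> av (x - y)"
      by (simp add: av_mult)
  qed simp
  finally show ?thesis .
qed

lemma av_pseries_lipschitz:
  assumes "has_pseries d G" "\<And>n. av (d n) \<le> 1" "av x \<le> 1" "av y \<le> 1"
  shows "av (G x - G y) \<le> av (x - y)"
  using av_tendsto_le[of "psum d x" "G x" "psum d y" "G y" 0] av_psum_diff_le assms
  unfolding has_pseries_def by blast

lemma av_pseries_tail_le:
  assumes "has_pseries d G" "av x \<le> 1" and tail: "\<And>n. M \<le> n \<Longrightarrow> av (d n) \<le> e"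
  shows "av (G x - psum d x M) \<le> e"
proof (rule av_tendsto_le[of "psum d x" _ "\<lambda>_. psum d x M" _ M])
  show "av_tendsto (psum d x) (G x)"
    using assms(1) unfolding has_pseries_def by blast
  show "av_tendsto (\<lambda>_. psum d x M) (psum d x M)"
    by (rule av_tendsto_eventually_const) simp
  fix N
  assume "M \<le> N"
  have "psum d x N - psum d x M = (\<Sum>n \<in> {..<N} - {..<M}. d n * x ^ n)"
    unfolding psum_def using \<open>M \<le> N\<close> by (subst sum_diff) auto
  also have "av \<dots> \<le> e"
  proof (rule av_sum_le)
    fix n
    assume "n \<in> {..<N} - {..<M}"
    then have "av (d n) \<le> e"
      by (simp add: tail)
    moreover have "av (d n) * av x ^ n \<le> av (d n)"
      using assms(2) by (simp add: mult_left_le power_le_one)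
    ultimately show "av (d n * x ^ n) \<le> e"
      by (simp add: av_mult av_power)
  next
    show "0 \<le> e"
      using tail[of M] av_nonneg[of "d M"] by linarith
  qed
  finally show "av (psum d x N - psum d x M) \<le> e" .
qed

lemma av_entire_const: "av_entire av (\<lambda>_. k)"
  unfolding av_entire_iff_has_pseries using has_pseries_const by blast

lemma av_entire_add: "av_entire av g \<Longrightarrow> av_entire av h \<Longrightarrow> av_entire av (\<lambda>z. g z + h z)"
  unfolding av_entire_iff_has_pseries using has_pseries_add by blast

lemma av_entire_cmult: "av_entire av g \<Longrightarrow> av_entire av (\<lambda>z. k * g z)"
  unfolding av_entire_iff_has_pseries using has_pseries_cmult by blast

lemma av_entire_mult: "av_entire av g \<Longrightarrow> av_entire av h \<Longrightarrow> av_entire av (\<lambda>z. g z * h z)"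
  unfolding av_entire_iff_has_pseries using has_pseries_mult by blast

lemma av_entire_diff: "av_entire av g \<Longrightarrow> av_entire av h \<Longrightarrow> av_entire av (\<lambda>z. g z - h z)"
  using av_entire_add[of g "\<lambda>z. -1 * h z"] av_entire_cmult[of h "-1"] by simp

lemma av_entire_eq_power_mult:
  assumes "av_entire av g" "g z0 \<noteq> 0"
  shows "\<exists>k G. av_entire av G \<and> G 0 \<noteq> 0 \<and> (\<forall>z. g z = z ^ k * G z)"
proof -
  obtain c where c: "has_pseries c g"
    using assms(1) av_entire_iff_has_pseries by blast
  have "\<exists>n. c n \<noteq> 0"
  proof (rule ccontr)
    assume "\<not> ?thesis"
    then have "g z0 = c 0"
      using has_pseries_eq_first_term[OF c] by auto
    with \<open>\<not> ?thesis\<close> assms(2) show False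
      by auto
  qed
  then obtain k where k: "c k \<noteq> 0" "\<And>n. n < k \<Longrightarrow> c n = 0"
    using exists_least_iff[of "\<lambda>n. c n \<noteq> 0"] by blast
  define G where "G = (\<lambda>z. if z = 0 then c k else g z / z ^ k)"
  have "av_entire av G"
    unfolding G_def av_entire_iff_has_pseries using has_pseries_divide_power[OF c k(2)] by blast
  moreover have "g z = z ^ k * G z" for z
    using has_pseries_at_0[OF c] k by (cases "k = 0") (auto simp: G_def)
  moreover have "G 0 \<noteq> 0"
    using k(1) by (simp add: G_def)
  ultimately show ?thesis
    by blast
qed

end

section \<open>Roots of polynomials\<close>

lemma coeff_linear_factor_mult:
  fixes b :: "'a::comm_semiring_1"
  shows "coeff ([:b, 1:] * r) k = b * coeff r k + (case k of 0 \<Rightarrow> 0 | Suc j \<Rightarrow> coeff r j)"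
  by (cases k) simp_all

locale ac_nonarch_field = nonarch_field +
  assumes alg_closed: "algebraically_closed TYPE('a)"
begin

lemma exists_root: "0 < degree (p :: 'a poly) \<Longrightarrow> \<exists>x. poly p x = 0"
  using alg_closed unfolding algebraically_closed_def by blast

lemma exists_nth_root:
  fixes b :: 'a
  assumes "0 < k"
  shows "\<exists>y. y ^ k = b"
proof -
  have "degree (monom 1 k + [:- b:]) = k"
    using assms by (subst degree_add_eq_left) (auto simp: degree_monom_eq)
  then obtain y where "poly (monom 1 k + [:- b:]) y = 0"
    using exists_root assms by metis
  then show ?thesis
    by (auto simp: poly_monom)
qed

lemma exists_ne_0_ne_1: "\<exists>t :: 'a. t \<noteq> 0 \<and> t \<noteq> 1"
proof -
  obtain t :: 'a where "poly [:-1, -1, 1:] t = 0"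
    using exists_root[of "[:-1, -1, 1:]"] by auto
  then have "t * t - t - 1 = 0"
    by (simp add: algebra_simps)
  then show ?thesis
    by (intro exI[of _ t]) auto
qed

lemma av_coeff_0_dominates_linear_factor_mult:
  assumes z: "1 < av z" and q: "coeff q 0 \<noteq> 0" "\<And>m. 0 < m \<Longrightarrow> av (coeff q m) < av (coeff q 0)"
    and "0 < n"
  shows "av (coeff ([:- z, 1:] * q) n) < av (coeff ([:- z, 1:] * q) 0)"
proof -
  obtain m where n: "n = Suc m"
    using \<open>0 < n\<close> by (cases n) auto
  have "av (coeff ([:- z, 1:] * q) n) \<le> max (av z * av (coeff q n)) (av (coeff q m))"
    using av_add_le_max[of "- z * coeff q n" "coeff q m"]
    unfolding coeff_linear_factor_mult n by (simp add: av_mult)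
  moreover have "av z * av (coeff q n) < av z * av (coeff q 0)"
    using q(2)[OF \<open>0 < n\<close>] z by simp
  moreover have "av (coeff q m) \<le> av (coeff q 0)"
    using q(2)[of m] by (cases m) auto
  then have "av (coeff q m) < av z * av (coeff q 0)"
    using z av_pos[OF q(1)] by (simp add: order_le_less_trans)
  ultimately show ?thesis
    unfolding coeff_linear_factor_mult by (simp add: av_mult)
qed

text \<open>All roots lie outside the closed unit disk, so each linear factor keeps the constant
  term dominant.\<close>
lemma av_coeff_0_dominates_if_no_root_in_unit_disk:
  assumes "p \<noteq> 0" "\<And>u. av u \<le> 1 \<Longrightarrow> poly p u \<noteq> 0" "0 < n"
  shows "av (coeff p n) < av (coeff p 0)"
  using assms
proof (induction "degree p" arbitrary: p n rule: less_induct)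
  case less
  show ?case
  proof (cases "degree p = 0")
    case True
    then have "coeff p n = 0"
      using less.prems(3) by (intro coeff_eq_0) simp
    moreover have "coeff p 0 \<noteq> 0"
      using less.prems(2)[of 0] by (simp add: poly_0_coeff_0)
    ultimately show ?thesis
      using av_pos by simp
  next
    case False
    then obtain z where z: "poly p z = 0"
      using exists_root by blast
    then obtain q where pq: "p = [:- z, 1:] * q"
      using poly_eq_0_iff_dvd by (metis dvdE)
    have q0: "q \<noteq> 0"
      using pq less.prems(1) by auto
    then have "degree q < degree p"
      unfolding pq by (subst degree_mult_eq) auto
    moreover have q_no_root: "poly q u \<noteq> 0" if "av u \<le> 1" for u
      using less.prems(2)[OF that] pq by simp
    ultimately have "av (coeff q m) < av (coeff q 0)" if "0 < m" for m
      using less.hyps q0 that by blast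
    moreover have "1 < av z"
      using z less.prems(2) by force
    moreover have "coeff q 0 \<noteq> 0"
      using q_no_root[of 0] by (simp add: poly_0_coeff_0)
    ultimately show ?thesis
      unfolding pq using av_coeff_0_dominates_linear_factor_mult less.prems(3) by blast
  qed
qed

lemma poly_root_in_unit_disk:
  assumes "0 < n" "coeff p n \<noteq> 0" "av (coeff p 0) \<le> av (coeff p n)"
  shows "\<exists>u. av u \<le> 1 \<and> poly p u = 0"
proof (rule ccontr)
  assume "\<not> ?thesis"
  moreover have "p \<noteq> 0"
    using assms(2) by auto
  ultimately have "av (coeff p n) < av (coeff p 0)"
    using av_coeff_0_dominates_if_no_root_in_unit_disk assms(1) by blast
  then show False
    using assms(3) by simp
qed

lemma av_coeff_pcompose_shift_less:
  assumes "av b \<le> 1" "0 < B" "\<And>k. m \<le> k \<Longrightarrow> av (coeff p k) < B" "m \<le> k"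
  shows "av (coeff (pcompose p [:b, 1:]) k) < B"
  using assms(3,4)
proof (induction p arbitrary: m k)
  case 0
  then show ?case
    using assms(2) by simp
next
  case (pCons a p)
  define r where "r = pcompose p [:b, 1:]"
  have "av (coeff p j) < B" if "m - 1 \<le> j" for j
    using pCons.prems(1)[of "Suc j"] that by simp
  then have r_less: "av (coeff r j) < B" if "m - 1 \<le> j" for j
    unfolding r_def using pCons.IH that by blast
  have "av (coeff r k) < B"
    using r_less[of k] pCons.prems(2) by simp
  then have b_less: "av (b * coeff r k) < B"
    using mult_left_le_one_le[of "av (coeff r k)" "av b"] assms(1) by (simp add: av_mult)
  have eq: "coeff (pcompose (pCons a p) [:b, 1:]) k =
      (if k = 0 then a else 0) + (b * coeff r k + (case k of 0 \<Rightarrow> 0 | Suc j \<Rightarrow> coeff r j))"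
    unfolding pcompose_pCons coeff_add r_def[symmetric] coeff_linear_factor_mult by (cases k) simp_all
  show ?case
  proof (cases k)
    case 0
    then have "av a < B"
      using pCons.prems(1)[of 0] pCons.prems(2) by simp
    with 0 show ?thesis
      using b_less unfolding eq by (simp add: av_add_less)
  next
    case (Suc j)
    then have "av (coeff r j) < B"
      using r_less pCons.prems(2) by simp
    with Suc show ?thesis
      using b_less unfolding eq by (simp add: av_add_less)
  qed
qed

lemma poly_root_below_constant_term:
  assumes "0 < m" "1 \<le> av (coeff p m)" "av (coeff p 0) < 1"
  shows "\<exists>t. av t \<le> 1 \<and> poly p t = 0 \<and> av t ^ m \<le> av (coeff p 0)"
proof (cases "coeff p 0 = 0")
  case True
  then show ?thesis
    using \<open>0 < m\<close> by (intro exI[of _ 0]) (simp add: poly_0_coeff_0 power_0_left)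
next
  case False
  obtain s where s: "s ^ m = coeff p 0"
    using exists_nth_root[OF \<open>0 < m\<close>] by blast
  then have av_s: "av s ^ m = av (coeff p 0)"
    by (simp flip: av_power)
  have "av s \<le> 1"
    using av_s assms(3) one_le_power[of "av s" m] by (cases "av s \<le> 1") auto
  define R where "R = pcompose p [:0, s:]"
  have R0: "coeff R 0 = coeff p 0" and Rm: "coeff R m = coeff p 0 * coeff p m"
    unfolding R_def coeff_pcompose_linear s by simp_all
  have "av (coeff R 0) \<le> av (coeff R m)"
    unfolding R0 Rm av_mult using mult_left_mono[OF assms(2), of "av (coeff p 0)"] by simp
  moreover have "coeff R m \<noteq> 0"
    using assms(2) False unfolding Rm by auto
  ultimately obtain t where t: "av t \<le> 1" "poly R t = 0"
    using poly_root_in_unit_disk[OF assms(1)] by blast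
  have "av (s * t) \<le> av s"
    using t(1) by (simp add: av_mult mult_left_le)
  then have "av (s * t) ^ m \<le> av s ^ m"
    by (intro power_mono) simp_all
  moreover have "av (s * t) \<le> 1"
    using \<open>av (s * t) \<le> av s\<close> \<open>av s \<le> 1\<close> by simp
  ultimately show ?thesis
    using t(2) unfolding R_def av_s by (intro exI[of _ "s * t"]) (simp add: poly_pcompose mult.commute)
qed

lemma exists_dominant_coeff_of_shift:
  assumes N: "av (coeff p N) = 1" and tail: "\<And>k. N < k \<Longrightarrow> av (coeff p k) < 1"
    and w: "av w \<le> 1" "av (poly p w) < 1"
  shows "\<exists>m. 0 < m \<and> m \<le> N \<and> 1 \<le> av (coeff (pcompose p [:w, 1:]) m)"
proof (rule ccontr)
  define E where "E = pcompose p [:w, 1:]"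
  assume "\<not> ?thesis"
  moreover have "coeff E 0 = poly p w"
    unfolding E_def by (simp add: poly_0_coeff_0[symmetric] poly_pcompose)
  ultimately have "av (coeff E k) < 1" if "k \<le> N" for k
    using that w(2) unfolding E_def by (cases "k = 0") auto
  then have "av (coeff E k) < 1" for k
    using av_coeff_pcompose_shift_less[OF w(1) zero_less_one, of "Suc N" p k] tail
    unfolding E_def by force
  moreover have "pcompose E [:- w, 1:] = p"
    unfolding E_def pcompose_assoc[symmetric] by (simp add: pcompose_pCons)
  ultimately have "av (coeff p N) < 1"
    using av_coeff_pcompose_shift_less[of "- w" 1 0 E N] w(1) by simp
  then show False
    using N by simp
qed

lemma poly_root_near:
  assumes N: "0 < N" "av (coeff p N) = 1" and tail: "\<And>k. N < k \<Longrightarrow> av (coeff p k) < 1"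
    and w: "av w \<le> 1" "av (poly p w) < 1"
  shows "\<exists>w'. av w' \<le> 1 \<and> poly p w' = 0 \<and> av (w' - w) ^ N \<le> av (poly p w)"
proof -
  define E where "E = pcompose p [:w, 1:]"
  have E0: "coeff E 0 = poly p w"
    unfolding E_def by (simp add: poly_0_coeff_0[symmetric] poly_pcompose)
  obtain m where m: "0 < m" "m \<le> N" "1 \<le> av (coeff E m)"
    using exists_dominant_coeff_of_shift[OF N(2) tail w] unfolding E_def by blast
  then obtain t where t: "av t \<le> 1" "poly E t = 0" "av t ^ m \<le> av (poly p w)"
    using poly_root_below_constant_term[of m E] E0 w(2) by auto
  have "av t ^ N \<le> av t ^ m"
    using t(1) m(2) by (intro power_decreasing) simp_all
  moreover have "poly p (w + t) = 0"
    using t(2) unfolding E_def by (simp add: poly_pcompose add.commute)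
  moreover have "av (w + t) \<le> 1"
    using t(1) w(1) by (rule av_add_le[rotated])
  ultimately show ?thesis
    using t(3) by (intro exI[of _ "w + t"]) simp
qed

end

section \<open>Zeros of entire functions\<close>

lemma last_index_with_value:
  fixes x :: "nat \<Rightarrow> real"
  assumes "x \<longlonglongrightarrow> 0" "x N0 = c" "c \<noteq> 0"
  shows "\<exists>N\<ge>N0. x N = c \<and> (\<forall>n>N. x n \<noteq> c)"
proof -
  obtain K where K: "\<And>n. K \<le> n \<Longrightarrow> norm (x n) < norm c"
    using assms(1)[unfolded LIMSEQ_iff, rule_format, of "norm c"] assms(3) by auto
  have "{n. x n = c} \<subseteq> {..<K}"
    using K by (auto simp: not_less[symmetric])
  then have finite: "finite {n. x n = c}"
    by (rule finite_subset) simp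
  have N0: "N0 \<in> {n. x n = c}"
    using assms(2) by simp
  define N where "N = Max {n. x n = c}"
  have "N \<in> {n. x n = c}"
    unfolding N_def using finite N0 by (intro Max_in) auto
  moreover have "N0 \<le> N"
    unfolding N_def using finite N0 by (rule Max_ge)
  moreover have "x n \<noteq> c" if "N < n" for n
  proof
    assume "x n = c"
    then have "n \<le> N"
      unfolding N_def using finite by (intro Max_ge) auto
    with that show False
      by simp
  qed
  ultimately show ?thesis
    by auto
qed

definition trunc_poly :: "(nat \<Rightarrow> 'a::comm_ring_1) \<Rightarrow> nat \<Rightarrow> 'a poly" where
  "trunc_poly c M = (\<Sum>n<M. monom (c n) n)"

lemma coeff_trunc_poly: "coeff (trunc_poly c M) k = (if k < M then c k else 0)"
  unfolding trunc_poly_def coeff_sum coeff_monom by (simp add: sum.delta)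

context nonarch_field
begin

lemma poly_trunc_poly: "poly (trunc_poly c M) z = psum c z M"
  unfolding trunc_poly_def poly_sum poly_monom psum_def ..

lemma pseries_root_if_truncation_roots_tendsto:
  assumes G: "has_pseries d G" and bounded: "\<And>n. av (d n) \<le> 1"
    and roots: "\<And>k. av (u k) \<le> 1" "\<And>k. psum d (u k) (k + K) = 0" and lim: "av_tendsto u L"
  shows "G L = 0"
proof -
  have terms: "(\<lambda>n. av (d n)) \<longlonglongrightarrow> 0"
    using has_pseries_terms_tendsto_0[OF G, of 1] by simp
  have lim': "(\<lambda>k. av (u k - L)) \<longlonglongrightarrow> 0"
    using lim unfolding av_tendsto_def .
  have L: "av L \<le> 1"
    using lim roots(1) by (rule av_le_if_av_tendsto)
  have small: "av (G L) \<le> e" if "0 < e" for e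
  proof -
    obtain k1 where k1: "\<And>k. k1 \<le> k \<Longrightarrow> av (u k - L) < e"
      using lim'[unfolded LIMSEQ_iff, rule_format, of e] \<open>0 < e\<close> by force
    obtain k2 where k2: "\<And>n. k2 \<le> n \<Longrightarrow> av (d n) < e"
      using terms[unfolded LIMSEQ_iff, rule_format, of e] \<open>0 < e\<close> by force
    define k where "k = k1 + k2"
    have "av (G L - G (u k)) \<le> av (L - u k)"
      by (rule av_pseries_lipschitz[OF G bounded L roots(1)])
    also have "\<dots> \<le> e"
      using k1[of k] av_diff_commute[of L "u k"] by (simp add: k_def)
    finally have "av (G L - G (u k)) \<le> e" .
    moreover have "av (G (u k) - psum d (u k) (k + K)) \<le> e"
      using k2 by (intro av_pseries_tail_le[OF G roots(1)]) (simp add: k_def less_imp_le)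
    ultimately show ?thesis
      using av_add_le[of "G L - G (u k)" e "G (u k)"] roots(2)[of k] by simp
  qed
  show ?thesis
  proof (rule ccontr)
    assume "G L \<noteq> 0"
    then have "0 < av (G L)"
      by (rule av_pos)
    then show False
      using small[of "av (G L) / 2"] by simp
  qed
qed

end

locale complete_ac_nonarch_field = ac_nonarch_field +
  assumes complete: "av_complete av"
begin

lemma av_tendsto_if_steps_tendsto_0:
  assumes steps: "(\<lambda>k. av (u (Suc k) - u k)) \<longlonglongrightarrow> 0"
  shows "\<exists>L. av_tendsto u L"
proof -
  have "\<exists>K. \<forall>m\<ge>K. \<forall>n\<ge>K. av (u m - u n) < e" if "0 < e" for e
  proof -
    obtain K where K: "\<And>k. K \<le> k \<Longrightarrow> av (u (Suc k) - u k) < e"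
      using steps[unfolded LIMSEQ_iff, rule_format, of e] \<open>0 < e\<close> by force
    have less: "av (u m - u n) < e" if "K \<le> n" "n \<le> m" for m n
    proof -
      have "u m - u n = (\<Sum>i = n..<m. u (Suc i) - u i)"
        using sum_Suc_diff'[OF that(2), of u] by simp
      also have "av \<dots> < e"
        using K that \<open>0 < e\<close> by (intro av_sum_less) auto
      finally show ?thesis .
    qed
    have "av (u m - u n) < e" if "K \<le> m" "K \<le> n" for m n
      using less[of n m] less[of m n] av_diff_commute[of "u m" "u n"] that by (cases "n \<le> m") auto
    then show ?thesis
      by blast
  qed
  then show ?thesis
    using complete unfolding av_complete_def av_tendsto_def by blast
qed

lemma exists_truncation_roots:
  assumes N: "0 < N" "av (d N) = 1" and d0: "av (d 0) \<le> 1"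
    and tail: "\<And>n. N < n \<Longrightarrow> av (d n) < 1"
  shows "\<exists>u. \<forall>k. (av (u k) \<le> 1 \<and> psum d (u k) (Suc N + k) = 0) \<and>
                 av (u (Suc k) - u k) ^ N \<le> av (d (Suc N + k))"
proof (rule dependent_nat_choice)
  have "coeff (trunc_poly d (Suc N)) N \<noteq> 0"
    using N(2) by (auto simp: coeff_trunc_poly)
  moreover have "av (coeff (trunc_poly d (Suc N)) 0) \<le> av (coeff (trunc_poly d (Suc N)) N)"
    using d0 N(2) by (simp add: coeff_trunc_poly)
  ultimately obtain u where "av u \<le> 1" "poly (trunc_poly d (Suc N)) u = 0"
    using poly_root_in_unit_disk[OF N(1)] by blast
  then show "\<exists>u. av u \<le> 1 \<and> psum d u (Suc N + 0) = 0"
    by (auto simp: poly_trunc_poly)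
next
  fix u k
  assume u: "av u \<le> 1 \<and> psum d u (Suc N + k) = 0"
  let ?p = "trunc_poly d (Suc N + Suc k)"
  have "av (poly ?p u) = av (d (Suc N + k)) * av u ^ (Suc N + k)"
    using u by (simp add: poly_trunc_poly psum_def av_mult av_power)
  also have "\<dots> \<le> av (d (Suc N + k))"
    using u by (intro mult_left_le power_le_one) auto
  finally have residual: "av (poly ?p u) \<le> av (d (Suc N + k))" .
  also have "\<dots> < 1"
    using tail by simp
  finally have "av (poly ?p u) < 1" .
  moreover have "av (coeff ?p N) = 1" "\<And>j. N < j \<Longrightarrow> av (coeff ?p j) < 1"
    using N(2) tail by (simp_all add: coeff_trunc_poly)
  ultimately obtain u' where "av u' \<le> 1" "poly ?p u' = 0" "av (u' - u) ^ N \<le> av (poly ?p u)"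
    using poly_root_near[OF N(1)] u by blast
  then show "\<exists>u'. (av u' \<le> 1 \<and> psum d u' (Suc N + Suc k) = 0) \<and> av (u' - u) ^ N \<le> av (d (Suc N + k))"
    using residual by (auto simp: poly_trunc_poly)
qed

text \<open>Roots of the truncations, each obtained from the previous one by poly_root_near, move
  by at most the N-th root of the next coefficient; they converge to a root of the series.\<close>
lemma normalized_pseries_has_root:
  assumes G: "has_pseries d G" and bounded: "\<And>n. av (d n) \<le> 1" and N0: "0 < N0" "av (d N0) = 1"
  shows "\<exists>w. G w = 0"
proof -
  have terms: "(\<lambda>n. av (d n)) \<longlonglongrightarrow> 0"
    using has_pseries_terms_tendsto_0[OF G, of 1] by simp
  obtain N where N: "N0 \<le> N" "av (d N) = 1" and tail: "\<And>n. N < n \<Longrightarrow> av (d n) < 1"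
    using last_index_with_value[OF terms N0(2)] bounded by (metis le_less one_neq_zero)
  obtain u where u: "\<And>k. av (u k) \<le> 1" "\<And>k. psum d (u k) (k + Suc N) = 0"
    and steps: "\<And>k. av (u (Suc k) - u k) ^ N \<le> av (d (Suc N + k))"
    using exists_truncation_roots[of N d] N N0(1) bounded tail by (auto simp: add.commute)
  have "(\<lambda>k. av (u (Suc k) - u k)) \<longlonglongrightarrow> 0"
  proof (rule LIMSEQ_0_sandwich)
    have "0 < N"
      using N(1) N0(1) by simp
    then show "av (u (Suc k) - u k) \<le> root N (av (d (Suc N + k)))" for k
      using real_root_le_mono[OF \<open>0 < N\<close> steps[of k]] by (simp add: real_root_power_cancel)
    have "(\<lambda>k. root N (av (d (k + Suc N)))) \<longlonglongrightarrow> root N 0"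
      by (intro tendsto_real_root LIMSEQ_ignore_initial_segment[OF terms])
    then show "(\<lambda>k. root N (av (d (Suc N + k)))) \<longlonglongrightarrow> 0"
      by (simp add: add.commute)
  qed simp
  then obtain L where "av_tendsto u L"
    using av_tendsto_if_steps_tendsto_0 by blast
  then show ?thesis
    using pseries_root_if_truncation_roots_tendsto[OF G bounded u] by blast
qed

end

context ac_nonarch_field
begin

text \<open>x is chosen of least absolute value among the n-th roots of c 0 / c n (the first slope of
  the Newton polygon); only finitely many compete because the terms of the series tend to 0.\<close>
lemma exists_dominant_rescaling:
  assumes c: "has_pseries c g" and "c 0 \<noteq> 0" "0 < k" "c k \<noteq> 0"
  shows "\<exists>x n. 0 < n \<and> c n * x ^ n = c 0 \<and> (\<forall>m. av (c m * x ^ m) \<le> av (c 0))"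
proof -
  define r where "r n = (SOME y. y ^ n = c 0 / c n)" for n
  have r: "r n ^ n = c 0 / c n" if "0 < n" for n
    unfolding r_def by (rule someI_ex) (rule exists_nth_root[OF that])
  have av_r: "av (c n) * av (r n) ^ n = av (c 0)" if "0 < n" "c n \<noteq> 0" for n
    using r[OF that(1)] that(2) by (metis av_mult av_power nonzero_mult_div_cancel_left times_divide_eq_right)
  define F where "F = {n. 0 < n \<and> c n \<noteq> 0 \<and> av (r n) \<le> av (r k)}"
  have "F \<subseteq> {n. av (c 0) \<le> av (c n * r k ^ n)}"
  proof
    fix n
    assume "n \<in> F"
    then have n: "0 < n" "c n \<noteq> 0" "av (r n) \<le> av (r k)"
      unfolding F_def by auto
    have "av (c 0) = av (c n) * av (r n) ^ n"
      using av_r[OF n(1,2)] by simp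
    also have "\<dots> \<le> av (c n * r k ^ n)"
      using n(3) by (simp add: av_mult av_power mult_left_mono power_mono)
    finally show "n \<in> {n. av (c 0) \<le> av (c n * r k ^ n)}"
      by simp
  qed
  then have "finite F"
    using finite_dominating_terms[OF c \<open>c 0 \<noteq> 0\<close>] by (rule finite_subset)
  moreover have "k \<in> F"
    unfolding F_def using assms(3,4) by simp
  ultimately obtain n where n: "n \<in> F" and minimal: "\<And>m. m \<in> F \<Longrightarrow> av (r n) \<le> av (r m)"
    using ex_is_arg_min_if_finite[of F "\<lambda>n. av (r n)"] unfolding is_arg_min_def by force
  have "av (c m * r n ^ m) \<le> av (c 0)" for m
  proof (cases "0 < m \<and> c m \<noteq> 0")
    case True
    have "av (r n) \<le> av (r m)"
      using minimal[of m] n True unfolding F_def by force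
    then have "av (c m) * av (r n) ^ m \<le> av (c m) * av (r m) ^ m"
      by (intro mult_left_mono power_mono) auto
    then show ?thesis
      using av_r True by (simp add: av_mult av_power)
  qed auto
  moreover have "0 < n" "c n * r n ^ n = c 0"
    using n r[of n] unfolding F_def by auto
  ultimately show ?thesis
    by blast
qed

end

context complete_ac_nonarch_field
begin

lemma pseries_has_root:
  assumes c: "has_pseries c g" and "0 < k" "c k \<noteq> 0"
  shows "\<exists>w. g w = 0"
proof (cases "c 0 = 0")
  case True
  then show ?thesis
    using has_pseries_at_0[OF c] by auto
next
  case False
  obtain x n where n: "0 < n" "c n * x ^ n = c 0" and dominant: "\<And>m. av (c m * x ^ m) \<le> av (c 0)"
    using exists_dominant_rescaling[OF c False assms(2,3)] by blast
  define d where "d m = inverse (c 0) * (c m * x ^ m)" for m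
  have "has_pseries d (\<lambda>u. inverse (c 0) * g (x * u))"
    unfolding d_def by (intro has_pseries_cmult has_pseries_rescale c)
  moreover have "av (d m) \<le> 1" for m
  proof -
    have "av (d m) = av (c m * x ^ m) / av (c 0)"
      unfolding d_def av_mult[of "inverse (c 0)"] av_inverse by (simp add: divide_inverse mult.commute)
    then show ?thesis
      using dominant[of m] av_pos[OF False] by simp
  qed
  moreover have "av (d n) = 1"
    using n False by (simp add: d_def)
  ultimately obtain w where "inverse (c 0) * g (x * w) = 0"
    using normalized_pseries_has_root n(1) by blast
  then show ?thesis
    using False by auto
qed

theorem av_entire_nonvanishing_imp_const:
  assumes "av_entire av g" "\<And>z. g z \<noteq> 0"
  shows "g z = g 0"
proof -
  obtain c where c: "has_pseries c g"
    using assms(1) av_entire_iff_has_pseries by blast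
  have "c k = 0" if "0 < k" for k
    using pseries_has_root[OF c that] assms(2) by blast
  then show ?thesis
    using has_pseries_eq_first_term[OF c] has_pseries_at_0[OF c] by simp
qed

text \<open>Dividing out the zeros at the origin yields an entire function that is nonzero at 0
  and zero everywhere else; shifted by a third value it has no zeros at all.\<close>
theorem av_entire_mult_eq_0:
  assumes g: "av_entire av g" and h: "av_entire av h" and zero: "\<And>z. g z * h z = 0"
  shows "(\<forall>z. g z = 0) \<or> (\<forall>z. h z = 0)"
proof (rule ccontr)
  assume "\<not> ?thesis"
  then obtain z1 z2 where "g z1 \<noteq> 0" "h z2 \<noteq> 0"
    by blast
  then obtain k1 G1 k2 G2 where G1: "av_entire av G1" "G1 0 \<noteq> 0" "\<And>z. g z = z ^ k1 * G1 z"
    and G2: "av_entire av G2" "G2 0 \<noteq> 0" "\<And>z. h z = z ^ k2 * G2 z"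
    using av_entire_eq_power_mult g h by metis
  define H where "H z = G1 z * G2 z" for z
  have H0: "H 0 \<noteq> 0"
    unfolding H_def using G1(2) G2(2) by simp
  have H_other: "H z = 0" if "z \<noteq> 0" for z
    using zero[of z] that unfolding H_def G1(3) G2(3) by simp
  obtain t :: 'a where t: "t \<noteq> 0" "t \<noteq> 1"
    using exists_ne_0_ne_1 by blast
  have "av_entire av (\<lambda>z. H z - t * H 0)"
    unfolding H_def by (intro av_entire_diff av_entire_mult G1(1) G2(1) av_entire_const)
  moreover have "H z - t * H 0 \<noteq> 0" for z
    using H0 H_other t by (cases "z = 0") auto
  ultimately have "H 1 - t * H 0 = H 0 - t * H 0"
    by (rule av_entire_nonvanishing_imp_const)
  then show False
    using H_other[of 1] H0 by simp
qed

end

section \<open>Lines and conics\<close>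

definition polar :: "(nat \<Rightarrow> nat \<Rightarrow> 'a::field) \<Rightarrow> (nat \<Rightarrow> 'a) \<Rightarrow> (nat \<Rightarrow> 'a) \<Rightarrow> 'a" where
  "polar q x y = lform (qgrad q x) y"

definition spans_kernel :: "(nat \<Rightarrow> 'a::field) \<Rightarrow> (nat \<Rightarrow> 'a) \<Rightarrow> (nat \<Rightarrow> 'a) \<Rightarrow> bool" where
  "spans_kernel a y1 y2 \<longleftrightarrow> (\<forall>v. lform a v = 0 \<longrightarrow> (\<exists>s t. \<forall>i<3. v i = s * y1 i + t * y2 i))"

lemma sum_less_3: "(\<Sum>i<3. f i) = f 0 + f 1 + f (2::nat)"
  by (simp add: numeral_3_eq_3 eval_nat_numeral)

lemma ex_less_3: "(\<exists>i<3. P i) \<longleftrightarrow> P 0 \<or> P 1 \<or> P (2::nat)"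
  by (auto simp: numeral_3_eq_3 less_Suc_eq eval_nat_numeral)

lemma lform_expand: "lform a x = a 0 * x 0 + a 1 * x 1 + a 2 * x 2"
  unfolding lform_def sum_less_3 ..

lemma qform_expand: "qform q x = q 0 0 * x 0 * x 0 + q 0 1 * x 0 * x 1 + q 0 2 * x 0 * x 2
   + q 1 1 * x 1 * x 1 + q 1 2 * x 1 * x 2 + q 2 2 * x 2 * x 2"
  unfolding qform_def sum_less_3 by simp

lemma polar_expand: "polar q x y = (2 * q 0 0 * x 0 + q 0 1 * x 1 + q 0 2 * x 2) * y 0
  + (q 0 1 * x 0 + 2 * q 1 1 * x 1 + q 1 2 * x 2) * y 1
  + (q 0 2 * x 0 + q 1 2 * x 1 + 2 * q 2 2 * x 2) * y 2"
  unfolding polar_def qgrad_def lform_expand sum_less_3 by (simp add: algebra_simps)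

lemmas forms_expand = lform_expand qform_expand polar_expand

lemma lform_lincomb: "lform a (\<lambda>i. s * x i + t * y i) = s * lform a x + t * lform a y"
  unfolding forms_expand by (simp add: algebra_simps)

lemma lform_diff: "lform a (\<lambda>i. x i - y i) = lform a x - lform a y"
  unfolding forms_expand by (simp add: algebra_simps)

lemma polar_lincomb_left: "polar q (\<lambda>i. s * x i + t * y i) w = s * polar q x w + t * polar q y w"
  unfolding forms_expand by (simp add: algebra_simps)

lemma polar_lincomb_right: "polar q w (\<lambda>i. s * x i + t * y i) = s * polar q w x + t * polar q w y"
  unfolding forms_expand by (simp add: algebra_simps)

lemma polar_diff_right: "polar q w (\<lambda>i. x i - y i) = polar q w x - polar q w y"
  unfolding forms_expand by (simp add: algebra_simps)

lemma polar_commute: "polar q x y = polar q y x"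
  unfolding forms_expand by (simp add: algebra_simps)

lemma polar_self: "polar q x x = 2 * qform q x"
  unfolding forms_expand by (simp add: algebra_simps)

lemma qform_add: "qform q (\<lambda>i. x i + y i) = qform q x + qform q y + polar q x y"
  unfolding forms_expand by (simp add: algebra_simps)

lemma qform_lincomb:
  "qform q (\<lambda>i. s * x i + t * y i) = s\<^sup>2 * qform q x + s * t * polar q x y + t\<^sup>2 * qform q y"
  unfolding forms_expand by (simp add: algebra_simps power2_eq_square)

lemma lform_cong: "(\<And>i. i < 3 \<Longrightarrow> x i = y i) \<Longrightarrow> lform a x = lform a y"
  unfolding lform_expand by simp

lemma qform_cong: "(\<And>i. i < 3 \<Longrightarrow> x i = y i) \<Longrightarrow> qform q x = qform q y"
  unfolding qform_expand by simp

lemma polar_cong: "(\<And>i. i < 3 \<Longrightarrow> x i = y i) \<Longrightarrow> polar q w x = polar q w y"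
  unfolding polar_expand by simp

lemma nonzero3_if_polar_ne_0: "polar q x y \<noteq> 0 \<Longrightarrow> nonzero3 x \<and> nonzero3 y"
  unfolding nonzero3_def ex_less_3 polar_expand by auto

lemma proportional3_if_lform_vanishes_on_kernel:
  assumes "\<And>v. lform a v = 0 \<Longrightarrow> lform g v = 0"
  shows "proportional3 g a"
  unfolding proportional3_def
proof (intro allI impI)
  fix i j :: nat
  assume "i < 3" "j < 3"
  define v where "v m = (if m = i then a j else if m = j then - a i else 0)" for m
  have "i = 0 \<or> i = 1 \<or> i = 2" "j = 0 \<or> j = 1 \<or> j = 2"
    using \<open>i < 3\<close> \<open>j < 3\<close> by linarith+
  then have "i = j \<or> (lform a v = 0 \<and> lform g v = g i * a j - g j * a i)"
    unfolding v_def lform_expand by (elim disjE) (simp_all add: algebra_simps)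
  then show "g i * a j = g j * a i"
    using assms[of v] by auto
qed

lemma proportional3_if_vanishes_on_spanning:
  assumes "spans_kernel a y1 y2" "lform g y1 = 0" "lform g y2 = 0"
  shows "proportional3 g a"
proof (rule proportional3_if_lform_vanishes_on_kernel)
  fix v
  assume "lform a v = 0"
  then obtain s t where "\<And>i. i < 3 \<Longrightarrow> v i = s * y1 i + t * y2 i"
    using assms(1) unfolding spans_kernel_def by blast
  then show "lform g v = 0"
    using assms(2,3) by (simp add: lform_cong[of v] lform_lincomb)
qed

lemma kernel_basis_at:
  assumes "a i \<noteq> 0" and ijk: "i < 3" "j < 3" "k < 3" "i \<noteq> j" "i \<noteq> k" "j \<noteq> k"
  shows "\<exists>y1 y2. lform a y1 = 0 \<and> lform a y2 = 0 \<and> spans_kernel a y1 y2 \<and>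
           (\<forall>s t. (\<forall>i<3. s * y1 i + t * y2 i = 0) \<longrightarrow> s = 0 \<and> t = 0)"
proof -
  have cases_3: "m = i \<or> m = j \<or> m = k" if "m < 3" for m
    using ijk that by linarith
  then have less_3: "{..<3} = {i, j, k}"
    using ijk by blast
  have all_3: "(\<forall>m<3. P m) \<longleftrightarrow> P i \<and> P j \<and> P k" for P
    using cases_3 ijk by blast
  have lform_ijk: "lform a x = a i * x i + a j * x j + a k * x k" for x
    unfolding lform_def lessThan_def[symmetric] less_3 using ijk by (simp add: algebra_simps)
  define y1 where "y1 m = (if m = i then - a j else if m = j then a i else 0)" for m
  define y2 where "y2 m = (if m = i then - a k else if m = k then a i else 0)" for m
  have "spans_kernel a y1 y2"
    unfolding spans_kernel_def
  proof (intro allI impI)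
    fix v
    assume "lform a v = 0"
    then have "v i = - (a j * v j + a k * v k) / a i"
      using \<open>a i \<noteq> 0\<close> unfolding lform_ijk by (simp add: field_simps add_eq_0_iff)
    then show "\<exists>s t. \<forall>m<3. v m = s * y1 m + t * y2 m"
      using ijk \<open>a i \<noteq> 0\<close> unfolding all_3 y1_def y2_def
      by (intro exI[of _ "v j / a i"] exI[of _ "v k / a i"]) (simp add: field_simps)
  qed
  moreover have "lform a y1 = 0" "lform a y2 = 0"
    using ijk unfolding lform_ijk y1_def y2_def by (simp_all add: algebra_simps)
  moreover have "s = 0 \<and> t = 0" if "\<forall>m<3. s * y1 m + t * y2 m = 0" for s t
    using that ijk \<open>a i \<noteq> 0\<close> unfolding all_3 y1_def y2_def by simp
  ultimately show ?thesis
    by blast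
qed

lemma kernel_basis:
  assumes "nonzero3 a"
  shows "\<exists>y1 y2. lform a y1 = 0 \<and> lform a y2 = 0 \<and> spans_kernel a y1 y2 \<and>
           (\<forall>s t. (\<forall>i<3. s * y1 i + t * y2 i = 0) \<longrightarrow> s = 0 \<and> t = 0)"
proof -
  consider "a 0 \<noteq> 0" | "a 1 \<noteq> 0" | "a 2 \<noteq> 0"
    using assms unfolding nonzero3_def ex_less_3 by blast
  then show ?thesis
  proof cases
    case 1
    then show ?thesis
      by (intro kernel_basis_at[of a 0 1 2]) simp_all
  next
    case 2
    then show ?thesis
      by (intro kernel_basis_at[of a 1 0 2]) simp_all
  next
    case 3
    then show ?thesis
      by (intro kernel_basis_at[of a 2 0 1]) simp_all
  qed
qed

lemma binary_quadratic_two_roots: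
  fixes A B C :: "'a::field"
  assumes alg_closed: "algebraically_closed TYPE('a)"
    and nondegenerate: "\<And>s t. A * s\<^sup>2 + B * s * t + C * t\<^sup>2 = 0 \<Longrightarrow>
      2 * A * s + B * t = 0 \<Longrightarrow> B * s + 2 * C * t = 0 \<Longrightarrow> s = 0 \<and> t = 0"
  shows "\<exists>s1 t1 s2 t2. A * s1\<^sup>2 + B * s1 * t1 + C * t1\<^sup>2 = 0 \<and>
           A * s2\<^sup>2 + B * s2 * t2 + C * t2\<^sup>2 = 0 \<and> s1 * t2 \<noteq> s2 * t1"
proof (cases "A = 0")
  case True
  then have "B \<noteq> 0"
    using nondegenerate[of 1 0] by auto
  then show ?thesis
    using True by (intro exI[of _ 1] exI[of _ 0] exI[of _ C] exI[of _ "- B"])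
      (simp add: power2_eq_square)
next
  case False
  then have "degree [:C, B, A:] = 2"
    by simp
  then obtain x1 where "poly [:C, B, A:] x1 = 0"
    using alg_closed unfolding algebraically_closed_def by (metis zero_less_numeral)
  then have root: "A * x1\<^sup>2 + B * x1 + C = 0"
    by (simp add: algebra_simps power2_eq_square)
  define x2 where "x2 = - B / A - x1"
  have sum: "A * (x1 + x2) = - B"
    unfolding x2_def using False by (simp add: field_simps)
  have "A * x1 * x2 = x1 * (A * (x1 + x2)) - A * x1 * x1"
    by (simp add: algebra_simps)
  also have "\<dots> = C"
    using sum root by (simp add: power2_eq_square) algebra
  finally have product: "A * x1 * x2 = C" .
  have "A * x2\<^sup>2 + B * x2 + C = 0"
    using sum product by algebra
  moreover have "x1 \<noteq> x2"
  proof
    assume "x1 = x2"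
    then have sum': "A * (x1 + x1) = - B" and product': "A * x1 * x1 = C"
      using sum product by simp_all
    then have "2 * A * x1 + B * 1 = 0"
      by algebra
    moreover have "B * x1 + 2 * C * 1 = 0"
      using sum' product' by algebra
    ultimately show False
      using nondegenerate[of x1 1] root by simp
  qed
  ultimately show ?thesis
    using root by (intro exI[of _ x1] exI[of _ 1] exI[of _ x2] exI[of _ 1]) simp
qed

lemma spans_kernel_change_basis:
  assumes "spans_kernel a y1 y2" "s1 * t2 \<noteq> s2 * t1"
  shows "spans_kernel a (\<lambda>i. s1 * y1 i + t1 * y2 i) (\<lambda>i. s2 * y1 i + t2 * y2 i)"
  unfolding spans_kernel_def
proof (intro allI impI)
  fix v
  assume "lform a v = 0"
  then obtain s t where v: "\<And>i. i < 3 \<Longrightarrow> v i = s * y1 i + t * y2 i"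
    using assms(1) unfolding spans_kernel_def by blast
  define D where "D = s1 * t2 - s2 * t1"
  have "D \<noteq> 0"
    using assms(2) unfolding D_def by simp
  have "v i = inverse D * (s * t2 - t * s2) * (s1 * y1 i + t1 * y2 i) +
      inverse D * (t * s1 - s * t1) * (s2 * y1 i + t2 * y2 i)" if "i < 3" for i
  proof -
    have "v i = inverse D * (D * v i)"
      using \<open>D \<noteq> 0\<close> by simp
    also have "D * v i = (s * t2 - t * s2) * (s1 * y1 i + t1 * y2 i) + (t * s1 - s * t1) * (s2 * y1 i + t2 * y2 i)"
      unfolding v[OF that] D_def by (simp add: algebra_simps)
    finally show ?thesis
      by (simp add: algebra_simps)
  qed
  then show "\<exists>s t. \<forall>i<3. v i = s * (s1 * y1 i + t1 * y2 i) + t * (s2 * y1 i + t2 * y2 i)"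
    by blast
qed

lemma polar_ne_0_if_transversal:
  assumes "transversal a q" "nonzero3 p1" "lform a p1 = 0" "qform q p1 = 0" "spans_kernel a p1 p2"
  shows "polar q p1 p2 \<noteq> 0"
proof
  assume "polar q p1 p2 = 0"
  moreover have "polar q p1 p1 = 0"
    using assms(4) by (simp add: polar_self)
  ultimately have "proportional3 (qgrad q p1) a"
    using assms(5) proportional3_if_vanishes_on_spanning unfolding polar_def by blast
  then show False
    using assms(1-4) unfolding transversal_def by blast
qed

lemma transversal_intersection_points:
  fixes a :: "nat \<Rightarrow> 'a::field" and q :: "nat \<Rightarrow> nat \<Rightarrow> 'a"
  assumes alg_closed: "algebraically_closed TYPE('a)"
    and line: "nonzero3 a" and transversal: "transversal a q"
  shows "\<exists>p1 p2. nonzero3 p1 \<and> nonzero3 p2 \<and> lform a p1 = 0 \<and> lform a p2 = 0 \<and>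
           qform q p1 = 0 \<and> qform q p2 = 0 \<and> polar q p1 p2 \<noteq> 0 \<and> spans_kernel a p1 p2"
proof -
  obtain y1 y2 where y: "lform a y1 = 0" "lform a y2 = 0" "spans_kernel a y1 y2"
    and independent: "\<And>s t. \<forall>i<3. s * y1 i + t * y2 i = 0 \<Longrightarrow> s = 0 \<and> t = 0"
    using kernel_basis[OF line] by blast
  define pt where "pt = (\<lambda>s t i. s * y1 i + t * y2 i)"
  have on_line: "lform a (pt s t) = 0" for s t
    unfolding pt_def lform_lincomb y by simp
  have nonzero: "nonzero3 (pt s t)" if "s \<noteq> 0 \<or> t \<noteq> 0" for s t
    using independent[of s t] that unfolding nonzero3_def pt_def by auto
  define A B C where "A = qform q y1" and "B = polar q y1 y2" and "C = qform q y2"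
  have on_conic: "qform q (pt s t) = A * s\<^sup>2 + B * s * t + C * t\<^sup>2" for s t
    unfolding pt_def qform_lincomb A_def B_def C_def by (simp add: algebra_simps)
  have polar_pt: "polar q (pt s t) y1 = 2 * A * s + B * t" "polar q (pt s t) y2 = B * s + 2 * C * t"
    for s t
    unfolding pt_def polar_lincomb_left polar_self A_def B_def C_def
    by (simp_all add: polar_commute[of q y2 y1] algebra_simps)
  have "s = 0 \<and> t = 0"
    if "A * s\<^sup>2 + B * s * t + C * t\<^sup>2 = 0" "2 * A * s + B * t = 0" "B * s + 2 * C * t = 0" for s t
  proof (rule ccontr)
    assume "\<not> (s = 0 \<and> t = 0)"
    then have "nonzero3 (pt s t)"
      using nonzero by blast
    moreover have "qform q (pt s t) = 0"
      using that(1) unfolding on_conic .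
    ultimately have "\<not> proportional3 (qgrad q (pt s t)) a"
      using transversal on_line[of s t] unfolding transversal_def by blast
    moreover have "lform (qgrad q (pt s t)) y1 = 0" "lform (qgrad q (pt s t)) y2 = 0"
      using that(2,3) polar_pt unfolding polar_def by simp_all
    ultimately show False
      using proportional3_if_vanishes_on_spanning[OF y(3)] by blast
  qed
  then obtain s1 t1 s2 t2 where "A * s1\<^sup>2 + B * s1 * t1 + C * t1\<^sup>2 = 0"
    "A * s2\<^sup>2 + B * s2 * t2 + C * t2\<^sup>2 = 0" and det: "s1 * t2 \<noteq> s2 * t1"
    using binary_quadratic_two_roots[OF alg_closed] by blast
  then have roots: "qform q (pt s1 t1) = 0" "qform q (pt s2 t2) = 0"
    unfolding on_conic by simp_all
  have span: "spans_kernel a (pt s1 t1) (pt s2 t2)"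
    unfolding pt_def using spans_kernel_change_basis[OF y(3) det] by simp
  have "nonzero3 (pt s1 t1)"
    using det by (intro nonzero) auto
  then have "polar q (pt s1 t1) (pt s2 t2) \<noteq> 0"
    by (rule polar_ne_0_if_transversal[OF transversal _ on_line roots(1) span])
  then show ?thesis
    using on_line roots span nonzero3_if_polar_ne_0
    by (intro exI[of _ "pt s1 t1"] exI[of _ "pt s2 t2"]) simp
qed

lemma polar_product_eq_if_same_level:
  assumes "qform q p1 = 0" "qform q p2 = 0" "spans_kernel a p1 p2"
    and "lform a x = lform a y" "qform q x = qform q y"
  shows "polar q p1 x * polar q p2 x = polar q p1 y * polar q p2 y"
proof -
  obtain s t where st: "\<And>i. i < 3 \<Longrightarrow> x i - y i = s * p1 i + t * p2 i"
    using assms(3,4) lform_diff[of a x y] unfolding spans_kernel_def by force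
  define v where "v = (\<lambda>i. s * p1 i + t * p2 i)"
  have x: "\<And>i. i < 3 \<Longrightarrow> x i = y i + v i"
    using st unfolding v_def by (metis add_diff_cancel_left' diff_add_cancel)
  have "qform q x = qform q (\<lambda>i. y i + v i)"
    by (rule qform_cong) (rule x)
  also have "\<dots> = qform q y + qform q v + polar q y v"
    by (rule qform_add)
  finally have level: "s * polar q p1 y + t * polar q p2 y + s * t * polar q p1 p2 = 0"
    using assms(1,2,5) unfolding v_def
    by (simp add: qform_lincomb polar_lincomb_right polar_commute[of q y] algebra_simps)
  have "polar q p x = polar q p (\<lambda>i. y i + v i)" for p
    by (rule polar_cong) (rule x)
  then have "polar q p x = polar q p y + s * polar q p p1 + t * polar q p p2" for p
    unfolding v_def using polar_lincomb_right[of q p 1 y 1 "\<lambda>i. s * p1 i + t * p2 i"]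
    by (simp add: polar_lincomb_right)
  then have "polar q p1 x = polar q p1 y + t * polar q p1 p2"
    and "polar q p2 x = polar q p2 y + s * polar q p1 p2"
    using assms(1,2) by (simp_all add: polar_self polar_commute[of q p2 p1])
  moreover have "(polar q p1 y + t * polar q p1 p2) * (polar q p2 y + s * polar q p1 p2) =
      polar q p1 y * polar q p2 y +
      polar q p1 p2 * (s * polar q p1 y + t * polar q p2 y + s * t * polar q p1 p2)"
    by algebra
  ultimately show ?thesis
    using level by simp
qed

lemma eq_if_same_line_and_polars:
  assumes "qform q p1 = 0" "qform q p2 = 0" "polar q p1 p2 \<noteq> 0" "spans_kernel a p1 p2"
    and "lform a x = lform a y" "polar q p1 x = polar q p1 y" "polar q p2 x = polar q p2 y" "i < 3"
  shows "x i = y i"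
proof -
  obtain s t where st: "\<And>i. i < 3 \<Longrightarrow> x i - y i = s * p1 i + t * p2 i"
    using assms(4,5) lform_diff[of a x y] unfolding spans_kernel_def by force
  have "polar q p (\<lambda>i. x i - y i) = s * polar q p p1 + t * polar q p p2" for p
    using polar_cong[of "\<lambda>i. x i - y i", OF st] by (simp add: polar_lincomb_right)
  then have "polar q p1 (\<lambda>i. x i - y i) = t * polar q p1 p2"
    and "polar q p2 (\<lambda>i. x i - y i) = s * polar q p1 p2"
    using assms(1,2) by (simp_all add: polar_self polar_commute[of q p2 p1])
  then have "s = 0" "t = 0"
    using assms(3,6,7) unfolding polar_diff_right by simp_all
  then show ?thesis
    using st[OF assms(8)] by simp
qed

section \<open>Analytic curves avoiding a line and a conic\<close>

lemma not_nonconstant_curve_if_const: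
  assumes "\<And>i z. i < 3 \<Longrightarrow> f i z = f i 0"
  shows "\<not> nonconstant_curve f"
proof -
  have "f i z * f j w = f j z * f i w" if "i < 3" "j < 3" for i j z w
    using assms[OF that(1), of z] assms[OF that(1), of w]
      assms[OF that(2), of z] assms[OF that(2), of w]
    by (simp add: mult.commute)
  then show ?thesis
    unfolding nonconstant_curve_def proportional3_def by blast
qed

context nonarch_field
begin

lemma av_entire_lform_curve:
  assumes "analytic_curve av f"
  shows "av_entire av (\<lambda>z. lform b (\<lambda>i. f i z))"
  using assms unfolding analytic_curve_def lform_expand by (intro av_entire_add av_entire_cmult) auto

lemma av_entire_qform_curve:
  assumes "analytic_curve av f"
  shows "av_entire av (\<lambda>z. qform q (\<lambda>i. f i z))"
proof -
  have "av_entire av (\<lambda>z. k * f i z * f j z)" if "i < 3" "j < 3" for k i j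
    using assms that unfolding analytic_curve_def by (intro av_entire_mult av_entire_cmult) auto
  then show ?thesis
    unfolding qform_expand by (intro av_entire_add) auto
qed

end

lemma (in complete_ac_nonarch_field) lform_qform_const_along_curve:
  assumes "analytic_curve av f" "\<forall>z. lform a (\<lambda>i. f i z) \<noteq> 0 \<and> qform q (\<lambda>i. f i z) \<noteq> 0"
  shows "lform a (\<lambda>i. f i z) = lform a (\<lambda>i. f i 0) \<and> qform q (\<lambda>i. f i z) = qform q (\<lambda>i. f i 0)"
  using assms(2) by (intro conjI av_entire_nonvanishing_imp_const av_entire_lform_curve
      av_entire_qform_curve assms(1); simp)+

theorem corollary2p2:
  fixes av :: "'a::field \<Rightarrow> real"
    and f :: "nat \<Rightarrow> 'a \<Rightarrow> 'a"
    and a :: "nat \<Rightarrow> 'a"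
    and q :: "nat \<Rightarrow> nat \<Rightarrow> 'a"
  assumes "algebraically_closed TYPE('a)"
    and "nonarch_abs av"
    and "av_complete av"
    and "analytic_curve av f"
    and "nonconstant_curve f"
    and "is_line a"
    and "nonsingular_conic q"
    and "transversal a q"
    and "\<forall>z. lform a (\<lambda>i. f i z) \<noteq> 0 \<and> qform q (\<lambda>i. f i z) \<noteq> 0"
  shows "\<exists>p. nonzero3 p \<and> lform a p = 0 \<and> qform q p = 0 \<and>
             (\<forall>z. lform (qgrad q p) (\<lambda>i. f i z) = 0)"
proof -
  interpret complete_ac_nonarch_field av
    using assms(1-3) by unfold_locales
  obtain p1 p2 where p: "nonzero3 p1" "nonzero3 p2" "lform a p1 = 0" "lform a p2 = 0"
    "qform q p1 = 0" "qform q p2 = 0" "polar q p1 p2 \<noteq> 0" "spans_kernel a p1 p2"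
    using transversal_intersection_points assms(1,6,8) unfolding is_line_def by blast
  define u1 u2 where "u1 z = polar q p1 (\<lambda>i. f i z)" and "u2 z = polar q p2 (\<lambda>i. f i z)" for z
  have u_entire: "av_entire av u1" "av_entire av u2"
    unfolding u1_def u2_def polar_def using av_entire_lform_curve[OF assms(4)] by blast+
  note level = lform_qform_const_along_curve[OF assms(4,9)]
  have u_product: "u1 z * u2 z = u1 0 * u2 0" for z
    unfolding u1_def u2_def using polar_product_eq_if_same_level p(5,6,8) level by blast
  show ?thesis
  proof (cases "u1 0 * u2 0 = 0")
    case True
    then have "(\<forall>z. u1 z = 0) \<or> (\<forall>z. u2 z = 0)"
      by (intro av_entire_mult_eq_0[OF u_entire]) (metis True u_product)
    then show ?thesis
      using p unfolding u1_def u2_def polar_def by blast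
  next
    case False
    then have "u1 z = u1 0" "u2 z = u2 0" for z
      using u_product by (intro av_entire_nonvanishing_imp_const u_entire; metis mult_eq_0_iff)+
    then have "f i z = f i 0" if "i < 3" for i z
      using eq_if_same_line_and_polars[OF p(5-8) _ _ _ that] level unfolding u1_def u2_def by blast
    then show ?thesis
      using not_nonconstant_curve_if_const assms(5) by blast
  qed
qed

end
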